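(* The set $T$ is good and full.
   Context: Let $X_1,X_2,X_3$ be pairwise disjoint nonempty sets and $\Omega=X_1\times X_2\times X_3$, with projections $\Pi_i:\Omega\to X_i$. For $S\subset\Omega$, the coordinates of $S$ are the elements of $\Pi_1S\cup\Pi_2S\cup\Pi_3S$. A set $S\subset\Omega$ is good if every function $f:S\to\mathbb C$ can be written $f(w_1,w_2,w_3)=u_1(w_1)+u_2(w_2)+u_3(w_3)$ for all $(w_1,w_2,w_3)\in S$, for some functions $u_i:X_i\to\mathbb C$. A set $S$ is full if it is a maximal good subset of $\Pi_1S\times\Pi_2S\times\Pi_3S$. Construction: fix pairwise distinct elements $x_1,y_1,\alpha_{5k-4},\alpha_{5k-1}$ ($k\ge1$) of $X_1$; pairwise distinct elements $x_2,y_2,\alpha_{5k-3},\alpha_{5k}$ ($k\ge1$) of $X_2$; pairwise distinct elements $x_3,z_3,\alpha_{5k-2}$ ($k\ge1$) of $X_3$. Set the convention $\alpha_{-3}:=y_2$, $\alpha_{-2}:=z_3$. Define $a_1=(x_1,x_2,x_3)$, $a_2=(y_1,y_2,x_3)$, $a_3=(y_1,x_2,z_3)$ and for $n\ge1$: $a_{5n-1}=(\alpha_{5n-4},\alpha_{5n-3},\alpha_{5n-2})$, $a_{5n}=(\alpha_{5n-1},\alpha_{5n},\alpha_{5n-2})$, $a_{5n+1}=(\alpha_{5n-4},\alpha_{5n},\alpha_{5n-7})$, $a_{5n+2}=(\alpha_{5n-1},\alpha_{5n-3},x_3)$, $a_{5n+3}=(x_1,\alpha_{5n-8},\alpha_{5n-2})$.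 Let $T=\{a_i:i\ge1\}$. *)

theory Defs
  imports "HOL-Analysis.Analysis"
begin

definition good :: "'a set \<Rightarrow> 'a set \<Rightarrow> 'a set \<Rightarrow> ('a \<times> 'a \<times> 'a) set \<Rightarrow> bool" where
  "good X1 X2 X3 S \<longleftrightarrow> S \<subseteq> X1 \<times> X2 \<times> X3 \<and>
     (\<forall>f :: 'a \<times> 'a \<times> 'a \<Rightarrow> complex. \<exists>u1 u2 u3 :: 'a \<Rightarrow> complex.
        \<forall>w1 w2 w3. (w1, w2, w3) \<in> S \<longrightarrow> f (w1, w2, w3) = u1 w1 + u2 w2 + u3 w3)"

definition proj1 :: "('a \<times> 'a \<times> 'a) set \<Rightarrow> 'a set" where
  "proj1 S = (\<lambda>(w1, w2, w3). w1) ` S"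
definition proj2 :: "('a \<times> 'a \<times> 'a) set \<Rightarrow> 'a set" where
  "proj2 S = (\<lambda>(w1, w2, w3). w2) ` S"
definition proj3 :: "('a \<times> 'a \<times> 'a) set \<Rightarrow> 'a set" where
  "proj3 S = (\<lambda>(w1, w2, w3). w3) ` S"

definition full :: "'a set \<Rightarrow> 'a set \<Rightarrow> 'a set \<Rightarrow> ('a \<times> 'a \<times> 'a) set \<Rightarrow> bool" where
  "full X1 X2 X3 S \<longleftrightarrow> good X1 X2 X3 S \<and> S \<subseteq> proj1 S \<times> proj2 S \<times> proj3 S \<and>
     (\<forall>S'. S \<subseteq> S' \<and> S' \<subseteq> proj1 S \<times> proj2 S \<times> proj3 S \<and> good X1 X2 X3 S' \<longrightarrow> S' = S)"

text \<open>The sequence alpha indexed by integers with the convention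
  alpha(-3) = y2, alpha(-2) = z3 (only indices -3, -2 and k >= 1 are used).\<close>
definition alpha_ext :: "'a \<Rightarrow> 'a \<Rightarrow> (nat \<Rightarrow> 'a) \<Rightarrow> int \<Rightarrow> 'a" where
  "alpha_ext y2 z3 \<alpha> k = (if k = -3 then y2 else if k = -2 then z3 else \<alpha> (nat k))"

definition aseq :: "'a \<Rightarrow> 'a \<Rightarrow> 'a \<Rightarrow> 'a \<Rightarrow> 'a \<Rightarrow> 'a \<Rightarrow> (nat \<Rightarrow> 'a) \<Rightarrow> nat \<Rightarrow> 'a \<times> 'a \<times> 'a" where
  "aseq x1 y1 x2 y2 x3 z3 \<alpha> i =
    (let A = alpha_ext y2 z3 \<alpha>; n = (int i + 1) div 5; r = (int i + 1) mod 5 in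
     if i = 1 then (x1, x2, x3)
     else if i = 2 then (y1, y2, x3)
     else if i = 3 then (y1, x2, z3)
     else if r = 0 then (A (5*n-4), A (5*n-3), A (5*n-2))
     else if r = 1 then (A (5*n-1), A (5*n), A (5*n-2))
     else if r = 2 then (A (5*n-4), A (5*n), A (5*n-7))
     else if r = 3 then (A (5*n-1), A (5*n-3), x3)
     else (x1, A (5*n-8), A (5*n-2)))"

definition Tset :: "'a \<Rightarrow> 'a \<Rightarrow> 'a \<Rightarrow> 'a \<Rightarrow> 'a \<Rightarrow> 'a \<Rightarrow> (nat \<Rightarrow> 'a) \<Rightarrow> ('a \<times> 'a \<times> 'a) set" where
  "Tset x1 y1 x2 y2 x3 z3 \<alpha> = aseq x1 y1 x2 y2 x3 z3 \<alpha> ` {1..}"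

end

theory Submission
  imports Defs
begin

(*
  T consists of three initial points and, for every block m >= 0, five points built from
  the coordinates p m = alpha(5m+1), q m = alpha(5m+4) (first axis), r m = alpha(5m+2),
  s m = alpha(5m+5) (second axis) and t m = alpha(5m+3) (third axis); the block-m points
  also use the "previous" coordinates y2 / r(m-1) and z3 / t(m-1).

  Goodness: writing f = u1 + u2 + u3 point by point is a linear system with one unknown per
  coordinate. Fixing u1 x1 = u3 x3 = 0, all unknowns of a block are determined by the value
  c_m of u3 at its previous third coordinate, and consistency forces c_(m+1) = (c_m - G_m)/2;
  the first three points then fix c_0 (a division by 3).  Fullness: a null solution of this
  system, normalised at (x1,x2,x3), satisfies c_m = 2 c_(m+1) and c_0 = 0, hence vanishes at
  every coordinate; so any sum u1 + u2 + u3 vanishing on T vanishes on the whole product of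
  its projections, and no point of that product can be added to T keeping it good.
*)

definition sum_vanishes ::
  "('a \<times> 'a \<times> 'a) set \<Rightarrow> ('a \<Rightarrow> 'b::comm_monoid_add) \<Rightarrow> ('a \<Rightarrow> 'b) \<Rightarrow> ('a \<Rightarrow> 'b) \<Rightarrow> bool" where
  "sum_vanishes S u1 u2 u3 \<longleftrightarrow> (\<forall>w1 w2 w3. (w1, w2, w3) \<in> S \<longrightarrow> u1 w1 + u2 w2 + u3 w3 = 0)"

lemma sum_vanishesD: "sum_vanishes S u1 u2 u3 \<Longrightarrow> (w1, w2, w3) \<in> S \<Longrightarrow> u1 w1 + u2 w2 + u3 w3 = 0"
  unfolding sum_vanishes_def by blast

lemma subset_proj_product: "S \<subseteq> proj1 S \<times> proj2 S \<times> proj3 S"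
  unfolding proj1_def proj2_def proj3_def by (force simp: image_iff)

text \<open>A point outside S but inside the
  product would otherwise carry the indicator function of itself.\<close>
lemma full_if_rigid:
  assumes good: "good X1 X2 X3 S"
    and rigid: "\<And>u1 u2 u3 :: 'a \<Rightarrow> complex. sum_vanishes S u1 u2 u3 \<Longrightarrow>
                  sum_vanishes (proj1 S \<times> proj2 S \<times> proj3 S) u1 u2 u3"
  shows "full X1 X2 X3 S"
proof -
  have "S' = S" if sub: "S \<subseteq> S'" and S'_sub: "S' \<subseteq> proj1 S \<times> proj2 S \<times> proj3 S"
    and good': "good X1 X2 X3 S'" for S'
  proof (rule ccontr)
    assume "S' \<noteq> S"
    with sub obtain w1 w2 w3 where new: "(w1, w2, w3) \<in> S'" "(w1, w2, w3) \<notin> S" by auto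
    define \<delta> :: "'a \<times> 'a \<times> 'a \<Rightarrow> complex" where "\<delta> v = (if v = (w1, w2, w3) then 1 else 0)" for v
    obtain u1 u2 u3 :: "'a \<Rightarrow> complex" where
      u: "\<And>v1 v2 v3. (v1, v2, v3) \<in> S' \<Longrightarrow> \<delta> (v1, v2, v3) = u1 v1 + u2 v2 + u3 v3"
      using good' unfolding good_def by (elim conjE allE[of _ \<delta>] exE) blast
    have "sum_vanishes S u1 u2 u3"
      unfolding sum_vanishes_def
    proof (intro allI impI)
      fix v1 v2 v3 assume v: "(v1, v2, v3) \<in> S"
      then have "\<delta> (v1, v2, v3) = 0" using new(2) by (auto simp: \<delta>_def)
      moreover have "(v1, v2, v3) \<in> S'" using v sub by blast
      ultimately show "u1 v1 + u2 v2 + u3 v3 = 0" using u by simp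
    qed
    then have "u1 w1 + u2 w2 + u3 w3 = 0"
      using rigid S'_sub new(1) by (blast intro: sum_vanishesD)
    moreover have "u1 w1 + u2 w2 + u3 w3 = 1" using u[OF new(1)] by (simp add: \<delta>_def)
    ultimately show False by simp
  qed
  then show ?thesis using good subset_proj_product unfolding full_def by blast
qed

definition override_range :: "('a \<Rightarrow> 'b) \<Rightarrow> ('i \<Rightarrow> 'a) \<Rightarrow> ('i \<Rightarrow> 'b) \<Rightarrow> 'a \<Rightarrow> 'b" where
  "override_range g p P w = (if w \<in> range p then P (inv p w) else g w)"

lemma override_range_in [simp]: "inj p \<Longrightarrow> override_range g p P (p m) = P m"
  by (simp add: override_range_def)

lemma override_range_out [simp]: "w \<notin> range p \<Longrightarrow> override_range g p P w = g w"
  by (simp add: override_range_def)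

lemma halving_zero:
  fixes c :: "nat \<Rightarrow> 'b::field_char_0"
  assumes "c 0 = 0" and "\<And>m. c m = 2 * c (Suc m)"
  shows "c m = 0"
proof (induction m)
  case (Suc m)
  with assms(2)[of m] show ?case by simp
qed (use assms(1) in simp)

text \<open>Fa, Fb, Fc are the values of f at the three initial
  points and P, Q, R, S, U its values at the five points of block m; the unknowns are the
  values a, b, c of the coordinate functions at y1, y2, z3 and A, D (first axis), B, E
  (second axis), C (third axis) at the block coordinates, the normalisation being
  u1 x1 = u3 x3 = 0 and u2 x2 = Fa.  The values C are forced by the recursion
  2 C m = C (m - 1) - G m, started from c, and c is fixed by the first three points.\<close>
lemma chain_system_solvable:
  fixes Fa Fb Fc :: "'b::field_char_0" and P Q R S U :: "nat \<Rightarrow> 'b"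
  obtains a b c :: 'b and A B C D E :: "nat \<Rightarrow> 'b"
  where "a + b = Fb" and "a + Fa + c = Fc"
    and "\<And>m. A m + B m + C m = P m" and "\<And>m. D m + E m + C m = Q m"
    and "\<And>m. A m + E m + case_nat c C m = R m" and "\<And>m. D m + B m = S m"
    and "\<And>m. case_nat b B m + C m = U m"
proof -
  define G where "G m = R m + S m - P m - Q m" for m
  define c where "c = (2 * (Fc - Fa + U 0 - Fb) + G 0) / 3"
  define cc where "cc = rec_nat c (\<lambda>m x. (x - G m) / 2)"
  define C where "C m = cc (Suc m)" for m
  define a where "a = Fc - Fa - c"
  define b where "b = U 0 - C 0"
  define B where "B m = U (Suc m) - C (Suc m)" for m
  define D where "D m = S m - B m" for m
  define A where "A m = P m - B m - C m" for m
  define E where "E m = Q m - C m - D m" for m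
  have cc_eq: "case_nat c C = cc" by (rule ext, simp add: C_def cc_def split: nat.split)
  have C_rec: "2 * C m = cc m - G m" for m by (simp add: C_def cc_def)
  have C0: "C 0 = (c - G 0) / 2" by (simp add: C_def cc_def)
  have "a + b = Fb"
    unfolding a_def b_def C0 c_def by (simp add: field_simps)
  moreover have "A m + E m + case_nat c C m = R m" for m
  proof -
    have "A m + E m + cc m = P m + Q m - S m + (cc m - 2 * C m)"
      by (simp add: A_def E_def D_def algebra_simps)
    also have "cc m - 2 * C m = G m"
      by (simp add: C_rec)
    finally show ?thesis by (simp add: cc_eq G_def)
  qed
  moreover have "case_nat b B m + C m = U m" for m
    by (cases m) (simp_all add: b_def B_def)
  ultimately show ?thesis
    by (intro that[of a b c A B C D E]) (simp_all add: a_def A_def D_def E_def)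
qed

text \<open>In block m, the terms
  case_nat y2 r m and case_nat z3 t m are the previous coordinates: y2 resp. z3 for m = 0,
  and r (m - 1) resp. t (m - 1) otherwise.\<close>
locale chain_data =
  fixes x1 y1 x2 y2 x3 z3 :: 'a and p q r s t :: "nat \<Rightarrow> 'a"
begin

definition points :: "('a \<times> 'a \<times> 'a) set" where
  "points = {(x1, x2, x3), (y1, y2, x3), (y1, x2, z3)} \<union>
     (\<Union>m. {(p m, r m, t m), (q m, s m, t m), (p m, s m, case_nat z3 t m),
           (q m, r m, x3), (x1, case_nat y2 r m, t m)})"

lemma points_mem:
  "(x1, x2, x3) \<in> points" "(y1, y2, x3) \<in> points" "(y1, x2, z3) \<in> points"
  "(p m, r m, t m) \<in> points" "(q m, s m, t m) \<in> points" "(p m, s m, case_nat z3 t m) \<in> points"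
  "(q m, r m, x3) \<in> points" "(x1, case_nat y2 r m, t m) \<in> points"
  unfolding points_def by blast+

lemma proj_points:
  "proj1 points = {x1, y1} \<union> range p \<union> range q"
  "proj2 points = {x2, y2} \<union> range r \<union> range s"
  "proj3 points = {x3, z3} \<union> range t"
proof -
  have "case_nat y2 r m \<in> {y2} \<union> range r" "case_nat z3 t m \<in> {z3} \<union> range t" for m
    by (cases m; simp)+
  then show "proj1 points = {x1, y1} \<union> range p \<union> range q"
    "proj2 points = {x2, y2} \<union> range r \<union> range s"
    "proj3 points = {x3, z3} \<union> range t"
    unfolding proj1_def proj2_def proj3_def points_def by (simp_all add: image_UN; blast)+
qed

lemma null_solution_vanishes:
  fixes v1 v2 v3 :: "'a \<Rightarrow> 'b::field_char_0"
  assumes null: "sum_vanishes points v1 v2 v3"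
    and base: "v1 x1 = 0" "v2 x2 = 0" "v3 x3 = 0"
  shows "v1 y1 = 0" "v2 y2 = 0" "v3 z3 = 0"
    and "v1 (p m) = 0" "v1 (q m) = 0" "v2 (r m) = 0" "v2 (s m) = 0" "v3 (t m) = 0"
proof -
  note eq = points_mem(2-8)[THEN sum_vanishesD[OF null]]
  define c where "c m = v3 (case_nat z3 t m)" for m
  have c_Suc: "c (Suc k) = v3 (t k)" for k by (simp add: c_def)
  have halve: "c k = 2 * c (Suc k)" for k
  proof -
    have "c k = 2 * v3 (t k)"
      using eq(3-6)[of k] base(3) unfolding c_def by algebra
    then show ?thesis by (simp add: c_Suc)
  qed
  have "v3 z3 + c (Suc 0) = 0"
    using eq(1) eq(2) eq(7)[of 0, simplified] base unfolding c_Suc by algebra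
  moreover have "c 0 = v3 z3" by (simp add: c_def)
  ultimately have "3 * c (Suc 0) = 0" using halve[of 0] by algebra
  then have "c 0 = 0" using halve[of 0] by simp
  then have c_zero: "c k = 0" for k using halve by (rule halving_zero)
  show t_zero: "v3 (t m) = 0" for m using c_zero[of "Suc m"] by (simp add: c_def)
  show z3_zero: "v3 z3 = 0" using c_zero[of 0] by (simp add: c_def)
  show r_zero: "v2 (r m) = 0" for m using eq(7)[of "Suc m"] t_zero base(1) by simp
  show "v1 (q m) = 0" using eq(6)[of m] r_zero base(3) by simp
  show "v1 (p m) = 0" using eq(3)[of m] r_zero t_zero by simp
  show y1_zero: "v1 y1 = 0" using eq(2) base z3_zero by simp
  show "v2 y2 = 0" using eq(1) base y1_zero by simp
  show "v2 (s m) = 0" using eq(4)[of m] \<open>v1 (q m) = 0\<close> t_zero by simp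
qed

lemma points_rigid:
  fixes u1 u2 u3 :: "'a \<Rightarrow> 'b::field_char_0"
  assumes null: "sum_vanishes points u1 u2 u3"
  shows "sum_vanishes (proj1 points \<times> proj2 points \<times> proj3 points) u1 u2 u3"
proof -
  define v1 where "v1 w = u1 w - u1 x1" for w
  define v2 where "v2 w = u2 w - u2 x2" for w
  define v3 where "v3 w = u3 w - u3 x3" for w
  have origin: "u1 x1 + u2 x2 + u3 x3 = 0"
    using sum_vanishesD[OF null points_mem(1)] .
  have "sum_vanishes points v1 v2 v3"
    unfolding sum_vanishes_def v1_def v2_def v3_def
    using sum_vanishesD[OF null] origin by (fastforce simp: algebra_simps)
  moreover have "v1 x1 = 0" "v2 x2 = 0" "v3 x3 = 0"
    by (simp_all add: v1_def v2_def v3_def)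
  ultimately have vanish: "v1 y1 = 0" "v2 y2 = 0" "v3 z3 = 0"
    "v1 (p m) = 0" "v1 (q m) = 0" "v2 (r m) = 0" "v2 (s m) = 0" "v3 (t m) = 0" for m
    by (rule null_solution_vanishes)+
  have "v1 w1 = 0" if "w1 \<in> proj1 points" for w1
    using that vanish by (auto simp: proj_points v1_def)
  moreover have "v2 w2 = 0" if "w2 \<in> proj2 points" for w2
    using that vanish by (auto simp: proj_points v2_def)
  moreover have "v3 w3 = 0" if "w3 \<in> proj3 points" for w3
    using that vanish by (auto simp: proj_points v3_def)
  ultimately show ?thesis
    unfolding sum_vanishes_def v1_def v2_def v3_def using origin
    by (auto simp: algebra_simps)
qed

lemma points_subset:
  assumes "{x1, y1} \<union> range p \<union> range q \<subseteq> X1" and "{x2, y2} \<union> range r \<union> range s \<subseteq> X2"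
    and "{x3, z3} \<union> range t \<subseteq> X3"
  shows "points \<subseteq> X1 \<times> X2 \<times> X3"
  using subset_proj_product[of points] assms unfolding proj_points by blast

end

locale chain = chain_data +
  assumes inj_p: "inj p" and inj_q: "inj q" and disj_pq: "range p \<inter> range q = {}"
    and x1_y1: "x1 \<noteq> y1" and x1_new: "x1 \<notin> range p \<union> range q" and y1_new: "y1 \<notin> range p \<union> range q"
    and inj_r: "inj r" and inj_s: "inj s" and disj_rs: "range r \<inter> range s = {}"
    and x2_y2: "x2 \<noteq> y2" and x2_new: "x2 \<notin> range r \<union> range s" and y2_new: "y2 \<notin> range r \<union> range s"
    and inj_t: "inj t" and x3_z3: "x3 \<noteq> z3" and x3_new: "x3 \<notin> range t" and z3_new: "z3 \<notin> range t"
begin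

lemma points_solvable:
  fixes f :: "'a \<times> 'a \<times> 'a \<Rightarrow> 'b::field_char_0"
  shows "\<exists>u1 u2 u3. \<forall>w1 w2 w3. (w1, w2, w3) \<in> points \<longrightarrow> f (w1, w2, w3) = u1 w1 + u2 w2 + u3 w3"
proof -
  obtain a b c A B C D E where
    sys: "a + b = f (y1, y2, x3)" "a + f (x1, x2, x3) + c = f (y1, x2, z3)"
      "\<And>m. A m + B m + C m = f (p m, r m, t m)" "\<And>m. D m + E m + C m = f (q m, s m, t m)"
      "\<And>m. A m + E m + case_nat c C m = f (p m, s m, case_nat z3 t m)"
      "\<And>m. D m + B m = f (q m, r m, x3)" "\<And>m. case_nat b B m + C m = f (x1, case_nat y2 r m, t m)"
    using chain_system_solvable[where Fa = "f (x1, x2, x3)" and Fb = "f (y1, y2, x3)"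
          and Fc = "f (y1, x2, z3)" and P = "\<lambda>m. f (p m, r m, t m)"
          and Q = "\<lambda>m. f (q m, s m, t m)" and R = "\<lambda>m. f (p m, s m, case_nat z3 t m)"
          and S = "\<lambda>m. f (q m, r m, x3)" and U = "\<lambda>m. f (x1, case_nat y2 r m, t m)"] by blast
  define u1 where "u1 = override_range (override_range (\<lambda>w. if w = y1 then a else 0) p A) q D"
  define u2 where "u2 = override_range (override_range (\<lambda>w. if w = x2 then f (x1, x2, x3) else b) r B) s E"
  define u3 where "u3 = override_range (\<lambda>w. if w = z3 then c else 0) t C"
  have p_not_q: "p m \<notin> range q" and r_not_s: "r m \<notin> range s" for m
    using disj_pq disj_rs by blast+
  have u1_val: "u1 x1 = 0" "u1 y1 = a" "u1 (p m) = A m" "u1 (q m) = D m" for m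
    using p_not_q x1_y1 x1_new y1_new inj_p inj_q unfolding u1_def by auto
  have u2_val: "u2 x2 = f (x1, x2, x3)" "u2 y2 = b" "u2 (r m) = B m" "u2 (s m) = E m" for m
    using r_not_s x2_y2 x2_new y2_new inj_r inj_s unfolding u2_def by auto
  have u3_val: "u3 x3 = 0" "u3 z3 = c" "u3 (t m) = C m" for m
    using x3_z3 x3_new z3_new inj_t unfolding u3_def by auto
  have u2_prev: "u2 (case_nat y2 r m) = case_nat b B m" for m
    by (cases m) (simp_all add: u2_val)
  have u3_prev: "u3 (case_nat z3 t m) = case_nat c C m" for m
    by (cases m) (simp_all add: u3_val)
  show ?thesis
  proof (intro exI allI impI)
    fix w1 w2 w3 assume "(w1, w2, w3) \<in> points"
    then show "f (w1, w2, w3) = u1 w1 + u2 w2 + u3 w3"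
      unfolding points_def using sys
      by (auto simp: u1_val u2_val u3_val u2_prev u3_prev)
  qed
qed

end

lemma alpha_ext_nat: "alpha_ext y2 z3 \<alpha> (int n) = \<alpha> n"
  by (simp add: alpha_ext_def)

lemma alpha_ext_z3: "alpha_ext y2 z3 \<alpha> (5 * int m - 2) = case_nat z3 (\<lambda>k. \<alpha> (5*k+3)) m"
proof (cases m)
  case (Suc k)
  then have index: "5 * int m - 2 = int (5*k+3)" by simp
  show ?thesis unfolding index alpha_ext_nat using Suc by simp
qed (simp add: alpha_ext_def)

lemma alpha_ext_y2: "alpha_ext y2 z3 \<alpha> (5 * int m - 3) = case_nat y2 (\<lambda>k. \<alpha> (5*k+2)) m"
proof (cases m)
  case (Suc k)
  then have index: "5 * int m - 3 = int (5*k+2)" by simp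
  show ?thesis unfolding index alpha_ext_nat using Suc by simp
qed (simp add: alpha_ext_def)

lemma aseq_blocks:
  fixes x1 y1 x2 y2 x3 z3 :: 'a and \<alpha> :: "nat \<Rightarrow> 'a" and m :: nat
  defines "a \<equiv> aseq x1 y1 x2 y2 x3 z3 \<alpha>"
  shows "a 1 = (x1, x2, x3)" "a 2 = (y1, y2, x3)" "a 3 = (y1, x2, z3)"
    and "a (5*m+4) = (\<alpha> (5*m+1), \<alpha> (5*m+2), \<alpha> (5*m+3))"
    and "a (5*m+5) = (\<alpha> (5*m+4), \<alpha> (5*m+5), \<alpha> (5*m+3))"
    and "a (5*m+6) = (\<alpha> (5*m+1), \<alpha> (5*m+5), case_nat z3 (\<lambda>k. \<alpha> (5*k+3)) m)"
    and "a (5*m+7) = (\<alpha> (5*m+4), \<alpha> (5*m+2), x3)"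
    and "a (5*m+8) = (x1, case_nat y2 (\<lambda>k. \<alpha> (5*k+2)) m, \<alpha> (5*m+3))"
proof -
  have block: "(int (5*m+j) + 1) div 5 = int m + 1" "(int (5*m+j) + 1) mod 5 = int j - 4"
    if "4 \<le> j" "j \<le> 8" for j using that by presburger+
  have idx: "alpha_ext y2 z3 \<alpha> (5 * (int m + 1) - int d) = \<alpha> (5*m + (5-d))" if "d \<le> 5" for d
  proof -
    have index: "5 * (int m + 1) - int d = int (5*m + (5-d))" using that by (simp add: of_nat_diff)
    show ?thesis unfolding index alpha_ext_nat ..
  qed
  show "a 1 = (x1, x2, x3)" "a 2 = (y1, y2, x3)" "a 3 = (y1, x2, z3)"
    unfolding a_def aseq_def by simp_all
  show "a (5*m+4) = (\<alpha> (5*m+1), \<alpha> (5*m+2), \<alpha> (5*m+3))"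
    using block[of 4] idx[of 4] idx[of 3] idx[of 2] unfolding a_def aseq_def Let_def by simp
  show "a (5*m+5) = (\<alpha> (5*m+4), \<alpha> (5*m+5), \<alpha> (5*m+3))"
    using block[of 5] idx[of 1] idx[of 0] idx[of 2] unfolding a_def aseq_def Let_def by simp
  show "a (5*m+6) = (\<alpha> (5*m+1), \<alpha> (5*m+5), case_nat z3 (\<lambda>k. \<alpha> (5*k+3)) m)"
    using block[of 6] idx[of 4] idx[of 0] alpha_ext_z3 unfolding a_def aseq_def Let_def
    by (simp add: algebra_simps)
  show "a (5*m+7) = (\<alpha> (5*m+4), \<alpha> (5*m+2), x3)"
    using block[of 7] idx[of 1] idx[of 3] unfolding a_def aseq_def Let_def by simp
  show "a (5*m+8) = (x1, case_nat y2 (\<lambda>k. \<alpha> (5*k+2)) m, \<alpha> (5*m+3))"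
    using block[of 8] idx[of 2] alpha_ext_y2 unfolding a_def aseq_def Let_def
    by (simp add: algebra_simps)
qed

lemma index_blocks: "{1::nat..} = {1, 2, 3} \<union> (\<Union>m. {5*m+4, 5*m+5, 5*m+6, 5*m+7, 5*m+8})"
proof (intro equalityI subsetI)
  fix i :: nat assume "i \<in> {1..}"
  then have "i \<in> {1, 2, 3} \<or> i \<in> {5*m+4, 5*m+5, 5*m+6, 5*m+7, 5*m+8}" if "m = (i - 4) div 5" for m
    using that by auto presburger
  then show "i \<in> {1, 2, 3} \<union> (\<Union>m. {5*m+4, 5*m+5, 5*m+6, 5*m+7, 5*m+8})" by blast
qed auto

lemma Tset_as_chain:
  "Tset x1 y1 x2 y2 x3 z3 \<alpha> = chain_data.points x1 y1 x2 y2 x3 z3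
     (\<lambda>m. \<alpha> (5*m+1)) (\<lambda>m. \<alpha> (5*m+4)) (\<lambda>m. \<alpha> (5*m+2)) (\<lambda>m. \<alpha> (5*m+5)) (\<lambda>m. \<alpha> (5*m+3))"
  unfolding Tset_def chain_data.points_def index_blocks
  by (simp add: image_UN aseq_blocks aseq_blocks(1)[unfolded One_nat_def])

lemma alpha_coordinates:
  fixes \<alpha> :: "nat \<Rightarrow> 'a"
  assumes "\<And>k. k \<ge> 1 \<Longrightarrow> \<alpha> (5*k-4) \<in> X1" and "\<And>k. k \<ge> 1 \<Longrightarrow> \<alpha> (5*k-1) \<in> X1"
    and "\<And>k. k \<ge> 1 \<Longrightarrow> \<alpha> (5*k-3) \<in> X2" and "\<And>k. k \<ge> 1 \<Longrightarrow> \<alpha> (5*k) \<in> X2"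
    and "\<And>k. k \<ge> 1 \<Longrightarrow> \<alpha> (5*k-2) \<in> X3"
  shows "range (\<lambda>m. \<alpha> (5*m+1)) \<subseteq> X1" "range (\<lambda>m. \<alpha> (5*m+4)) \<subseteq> X1"
    "range (\<lambda>m. \<alpha> (5*m+2)) \<subseteq> X2" "range (\<lambda>m. \<alpha> (5*m+5)) \<subseteq> X2"
    "range (\<lambda>m. \<alpha> (5*m+3)) \<subseteq> X3"
proof -
  have "\<alpha> (5*m+1) \<in> X1" "\<alpha> (5*m+4) \<in> X1" "\<alpha> (5*m+2) \<in> X2" "\<alpha> (5*m+5) \<in> X2"
    "\<alpha> (5*m+3) \<in> X3" for m
    using assms(1)[of "Suc m"] assms(2)[of "Suc m"] assms(3)[of "Suc m"] assms(4)[of "Suc m"]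
      assms(5)[of "Suc m"] by (simp_all add: add.commute)
  then show "range (\<lambda>m. \<alpha> (5*m+1)) \<subseteq> X1" "range (\<lambda>m. \<alpha> (5*m+4)) \<subseteq> X1"
    "range (\<lambda>m. \<alpha> (5*m+2)) \<subseteq> X2" "range (\<lambda>m. \<alpha> (5*m+5)) \<subseteq> X2"
    "range (\<lambda>m. \<alpha> (5*m+3)) \<subseteq> X3" by blast+
qed

lemma reindexed_inj:
  assumes "inj_on \<alpha> I" and "range f \<subseteq> I" and "inj f"
  shows "inj (\<lambda>m. \<alpha> (f m))"
  using assms unfolding inj_def inj_on_def by blast

lemma reindexed_disjoint:
  assumes "inj_on \<alpha> I" and "range f \<subseteq> I" and "range g \<subseteq> I" and "range f \<inter> range g = {}"
  shows "range (\<lambda>m. \<alpha> (f m)) \<inter> range (\<lambda>m. \<alpha> (g m)) = {}"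
  using assms unfolding inj_on_def by blast

lemma reindexed_avoids:
  assumes "c \<notin> \<alpha> ` I" and "range f \<subseteq> I"
  shows "c \<notin> range (\<lambda>m. \<alpha> (f m))"
  using assms by blast

lemma alpha_chain:
  fixes \<alpha> :: "nat \<Rightarrow> 'a"
  defines "I1 \<equiv> {5*k-4 | k. k \<ge> 1} \<union> {5*k-1 | k. k \<ge> 1}"
    and "I2 \<equiv> {5*k-3 | k. k \<ge> 1} \<union> {5*k | k. k \<ge> 1}"
    and "I3 \<equiv> {5*k-2 | k. k \<ge> 1}"
  assumes dist1: "inj_on \<alpha> I1" "x1 \<noteq> y1" "x1 \<notin> \<alpha> ` I1" "y1 \<notin> \<alpha> ` I1"
    and dist2: "inj_on \<alpha> I2" "x2 \<noteq> y2" "x2 \<notin> \<alpha> ` I2" "y2 \<notin> \<alpha> ` I2"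
    and dist3: "inj_on \<alpha> I3" "x3 \<noteq> z3" "x3 \<notin> \<alpha> ` I3" "z3 \<notin> \<alpha> ` I3"
  shows "chain x1 y1 x2 y2 x3 z3
    (\<lambda>m. \<alpha> (5*m+1)) (\<lambda>m. \<alpha> (5*m+4)) (\<lambda>m. \<alpha> (5*m+2)) (\<lambda>m. \<alpha> (5*m+5)) (\<lambda>m. \<alpha> (5*m+3))"
proof -
  have "5*m+1 \<in> {5*k-4 | k. k \<ge> 1}" "5*m+4 \<in> {5*k-1 | k. k \<ge> 1}"
    "5*m+2 \<in> {5*k-3 | k. k \<ge> 1}" "5*m+5 \<in> {5*k | k. k \<ge> 1}" "5*m+3 \<in> {5*k-2 | k. k \<ge> 1}"
    for m :: nat by (intro CollectI exI[of _ "Suc m"]; simp)+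
  then have ranges: "range (\<lambda>m. 5*m+1) \<subseteq> I1" "range (\<lambda>m. 5*m+4) \<subseteq> I1"
    "range (\<lambda>m. 5*m+2) \<subseteq> I2" "range (\<lambda>m. 5*m+5) \<subseteq> I2" "range (\<lambda>m. 5*m+3) \<subseteq> I3"
    unfolding I1_def I2_def I3_def by blast+
  have inj: "inj (\<lambda>m::nat. 5*m + j)" for j by (simp add: inj_def)
  have disj: "range (\<lambda>m::nat. 5*m+1) \<inter> range (\<lambda>m. 5*m+4) = {}"
    "range (\<lambda>m::nat. 5*m+2) \<inter> range (\<lambda>m. 5*m+5) = {}" by (auto, presburger+)
  show ?thesis
  proof unfold_locales
    show "inj (\<lambda>m. \<alpha> (5*m+1))" "inj (\<lambda>m. \<alpha> (5*m+4))"
      using reindexed_inj[OF dist1(1) ranges(1) inj] reindexed_inj[OF dist1(1) ranges(2) inj] .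
    show "inj (\<lambda>m. \<alpha> (5*m+2))" "inj (\<lambda>m. \<alpha> (5*m+5))"
      using reindexed_inj[OF dist2(1) ranges(3) inj] reindexed_inj[OF dist2(1) ranges(4) inj] .
    show "inj (\<lambda>m. \<alpha> (5*m+3))" using reindexed_inj[OF dist3(1) ranges(5) inj] .
    show "range (\<lambda>m. \<alpha> (5*m+1)) \<inter> range (\<lambda>m. \<alpha> (5*m+4)) = {}"
      using reindexed_disjoint[OF dist1(1) ranges(1,2) disj(1)] .
    show "range (\<lambda>m. \<alpha> (5*m+2)) \<inter> range (\<lambda>m. \<alpha> (5*m+5)) = {}"
      using reindexed_disjoint[OF dist2(1) ranges(3,4) disj(2)] .
    show "x1 \<notin> range (\<lambda>m. \<alpha> (5*m+1)) \<union> range (\<lambda>m. \<alpha> (5*m+4))"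
      using reindexed_avoids[OF dist1(3) ranges(1)] reindexed_avoids[OF dist1(3) ranges(2)] by blast
    show "y1 \<notin> range (\<lambda>m. \<alpha> (5*m+1)) \<union> range (\<lambda>m. \<alpha> (5*m+4))"
      using reindexed_avoids[OF dist1(4) ranges(1)] reindexed_avoids[OF dist1(4) ranges(2)] by blast
    show "x2 \<notin> range (\<lambda>m. \<alpha> (5*m+2)) \<union> range (\<lambda>m. \<alpha> (5*m+5))"
      using reindexed_avoids[OF dist2(3) ranges(3)] reindexed_avoids[OF dist2(3) ranges(4)] by blast
    show "y2 \<notin> range (\<lambda>m. \<alpha> (5*m+2)) \<union> range (\<lambda>m. \<alpha> (5*m+5))"
      using reindexed_avoids[OF dist2(4) ranges(3)] reindexed_avoids[OF dist2(4) ranges(4)] by blast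
    show "x3 \<notin> range (\<lambda>m. \<alpha> (5*m+3))" using reindexed_avoids[OF dist3(3) ranges(5)] .
    show "z3 \<notin> range (\<lambda>m. \<alpha> (5*m+3))" using reindexed_avoids[OF dist3(4) ranges(5)] .
  qed (fact dist1(2) dist2(2) dist3(2))+
qed

text \<open>The main theorem.\<close>
theorem mainTheorem3:
  fixes X1 X2 X3 :: "'a set"
    and x1 y1 x2 y2 x3 z3 :: 'a
    and \<alpha> :: "nat \<Rightarrow> 'a"
  assumes disj: "X1 \<inter> X2 = {}" "X1 \<inter> X3 = {}" "X2 \<inter> X3 = {}"
    and ne: "X1 \<noteq> {}" "X2 \<noteq> {}" "X3 \<noteq> {}"
    and in1: "x1 \<in> X1" "y1 \<in> X1" "\<And>k. k \<ge> 1 \<Longrightarrow> \<alpha> (5*k-4) \<in> X1" "\<And>k. k \<ge> 1 \<Longrightarrow> \<alpha> (5*k-1) \<in> X1"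
    and in2: "x2 \<in> X2" "y2 \<in> X2" "\<And>k. k \<ge> 1 \<Longrightarrow> \<alpha> (5*k-3) \<in> X2" "\<And>k. k \<ge> 1 \<Longrightarrow> \<alpha> (5*k) \<in> X2"
    and in3: "x3 \<in> X3" "z3 \<in> X3" "\<And>k. k \<ge> 1 \<Longrightarrow> \<alpha> (5*k-2) \<in> X3"
    and dist1: "inj_on \<alpha> ({5*k-4 | k. k \<ge> 1} \<union> {5*k-1 | k. k \<ge> 1})"
      "x1 \<noteq> y1" "x1 \<notin> \<alpha> ` ({5*k-4 | k. k \<ge> 1} \<union> {5*k-1 | k. k \<ge> 1})"
      "y1 \<notin> \<alpha> ` ({5*k-4 | k. k \<ge> 1} \<union> {5*k-1 | k. k \<ge> 1})"
    and dist2: "inj_on \<alpha> ({5*k-3 | k. k \<ge> 1} \<union> {5*k | k. k \<ge> 1})"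
      "x2 \<noteq> y2" "x2 \<notin> \<alpha> ` ({5*k-3 | k. k \<ge> 1} \<union> {5*k | k. k \<ge> 1})"
      "y2 \<notin> \<alpha> ` ({5*k-3 | k. k \<ge> 1} \<union> {5*k | k. k \<ge> 1})"
    and dist3: "inj_on \<alpha> {5*k-2 | k. k \<ge> 1}"
      "x3 \<noteq> z3" "x3 \<notin> \<alpha> ` {5*k-2 | k. k \<ge> 1}" "z3 \<notin> \<alpha> ` {5*k-2 | k. k \<ge> 1}"
  shows "good X1 X2 X3 (Tset x1 y1 x2 y2 x3 z3 \<alpha>) \<and> full X1 X2 X3 (Tset x1 y1 x2 y2 x3 z3 \<alpha>)"
proof -
  define p q r s t where "p m = \<alpha> (5*m+1)" and "q m = \<alpha> (5*m+4)" and "r m = \<alpha> (5*m+2)"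
    and "s m = \<alpha> (5*m+5)" and "t m = \<alpha> (5*m+3)" for m
  note coordinates = p_def[abs_def] q_def[abs_def] r_def[abs_def] s_def[abs_def] t_def[abs_def]
  have T: "Tset x1 y1 x2 y2 x3 z3 \<alpha> = chain_data.points x1 y1 x2 y2 x3 z3 p q r s t"
    unfolding coordinates by (rule Tset_as_chain)
  interpret chain x1 y1 x2 y2 x3 z3 p q r s t
    unfolding coordinates by (rule alpha_chain[OF dist1 dist2 dist3])
  note ranges = alpha_coordinates[OF in1(3,4) in2(3,4) in3(3), folded coordinates]
  have "points \<subseteq> X1 \<times> X2 \<times> X3"
    using ranges in1(1,2) in2(1,2) in3(1,2) by (intro points_subset) auto
  then have good: "good X1 X2 X3 points"
    unfolding good_def using points_solvable by blast
  moreover have "full X1 X2 X3 points"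
    using good points_rigid by (rule full_if_rigid)
  ultimately show ?thesis unfolding T by blast
qed

end
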